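(* For integers $n>1$ and $m>1$, $\chi_{ld}(F_m[\overline{K_{n}}])=3$.
   Context: All graphs are finite, simple and undirected. For a graph $G=(V,E)$ of order $N$ without isolated vertices, a bijection $f\colon V\to\{1,2,\dots,N\}$ is a local distance antimagic labeling if $w(u)\neq w(v)$ for every edge $uv$, where $w(u)=\sum_{x\in N(u)}f(x)$ and $N(u)$ is the open neighborhood of $u$. $\chi_{ld}(G)$ is the minimum number of distinct weights over all local distance antimagic labelings of $G$. The friendship graph $F_m=mK_2+K_1$ consists of $m$ disjoint edges together with a central vertex adjacent to all $2m$ of their endpoints. $\overline{K_n}$ is the edgeless graph on $n$ vertices. The lexicographic product $G[H]$ has vertex set $V(G)\times V(H)$, with $(g,h)$ adjacent to $(g',h')$ iff $gg'\in E(G)$, or $g=g'$ and $hh'\in E(H)$. *)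

theory Defs
  imports Main
begin

text \<open>A finite simple graph is given by a vertex set V and a symmetric irreflexive
adjacency relation E (only its restriction to V matters).\<close>

definition nbhd :: "'a set \<Rightarrow> ('a \<Rightarrow> 'a \<Rightarrow> bool) \<Rightarrow> 'a \<Rightarrow> 'a set" where
  "nbhd V E u = {x \<in> V. E u x}"

definition vweight :: "'a set \<Rightarrow> ('a \<Rightarrow> 'a \<Rightarrow> bool) \<Rightarrow> ('a \<Rightarrow> nat) \<Rightarrow> 'a \<Rightarrow> nat" where
  "vweight V E f u = (\<Sum>x\<in>nbhd V E u. f x)"

definition local_distance_antimagic ::
  "'a set \<Rightarrow> ('a \<Rightarrow> 'a \<Rightarrow> bool) \<Rightarrow> ('a \<Rightarrow> nat) \<Rightarrow> bool" where
  "local_distance_antimagic V E f \<longleftrightarrow>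
     bij_betw f V {1..card V} \<and>
     (\<forall>u\<in>V. \<forall>v\<in>V. E u v \<longrightarrow> vweight V E f u \<noteq> vweight V E f v)"

definition chi_ld :: "'a set \<Rightarrow> ('a \<Rightarrow> 'a \<Rightarrow> bool) \<Rightarrow> nat" where
  "chi_ld V E = (LEAST k. \<exists>f. local_distance_antimagic V E f \<and>
                          card (vweight V E f ` V) = k)"

text \<open>Friendship graph F_m: centre None, leaves Some (i,b) for i < m, b :: bool;
the i-th matching edge joins Some (i,False) and Some (i,True).\<close>

definition friendship_V :: "nat \<Rightarrow> (nat \<times> bool) option set" where
  "friendship_V m = insert None (Some ` ({..<m} \<times> UNIV))"

fun friendship_E :: "(nat \<times> bool) option \<Rightarrow> (nat \<times> bool) option \<Rightarrow> bool" where
  "friendship_E None None = False"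
| "friendship_E None (Some _) = True"
| "friendship_E (Some _) None = True"
| "friendship_E (Some (i, a)) (Some (j, b)) = (i = j \<and> a \<noteq> b)"

definition empty_V :: "nat \<Rightarrow> nat set" where
  "empty_V n = {..<n}"

definition empty_E :: "nat \<Rightarrow> nat \<Rightarrow> bool" where
  "empty_E u v = False"

definition lex_V :: "'a set \<Rightarrow> 'b set \<Rightarrow> ('a \<times> 'b) set" where
  "lex_V VG VH = VG \<times> VH"

definition lex_E :: "('a \<Rightarrow> 'a \<Rightarrow> bool) \<Rightarrow> ('b \<Rightarrow> 'b \<Rightarrow> bool) \<Rightarrow>
                    'a \<times> 'b \<Rightarrow> 'a \<times> 'b \<Rightarrow> bool" where
  "lex_E EG EH p q \<longleftrightarrow> EG (fst p) (fst q) \<or> (fst p = fst q \<and> EH (snd p) (snd q))"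

end

theory Submission
  imports Defs
begin

(* In F_m[K_n-bar] the vertex (x, j) is adjacent to exactly the vertices (y, k) with y adjacent to x
   in F_m, so its weight is the sum of the column sums S y = (sum over k of f (y, k)) over the
   neighbours y of x. Any triangle of F_m therefore forces three distinct weights. Conversely, order
   the vertices of F_m as the leaves (i, False), the leaves (i, True) and the centre, and give (x, j)
   the label j (2m+1) + sigma_j (index of x) + 1 for suitable permutations sigma_j of {0..2m}, chosen
   so that S takes a value a on the first block of leaves, b on the second and c on the centre. The
   centre then has weight m (a + b) and the leaves c + b and c + a, three distinct values. *)

lemma card_vweight_image_ge_3_if_triangle:
  assumes "finite V" "local_distance_antimagic V E f"
    and "u \<in> V" "v \<in> V" "w \<in> V" "E u v" "E v w" "E u w"
  shows "3 \<le> card (vweight V E f ` V)"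
proof -
  let ?w = "vweight V E f"
  have "?w u \<noteq> ?w v" "?w v \<noteq> ?w w" "?w u \<noteq> ?w w"
    using assms(2-) unfolding local_distance_antimagic_def by blast+
  then have "card {?w u, ?w v, ?w w} = 3" by simp
  moreover have "{?w u, ?w v, ?w w} \<subseteq> ?w ` V" using assms(3-5) by blast
  ultimately show ?thesis using assms(1) by (metis card_mono finite_imageI)
qed

lemma nbhd_lex_empty:
  "nbhd (lex_V VG (empty_V n)) (lex_E EG empty_E) (x, j) = nbhd VG EG x \<times> {..<n}"
  by (auto simp: nbhd_def lex_V_def lex_E_def empty_V_def empty_E_def)

lemma vweight_lex_empty:
  "vweight (lex_V VG (empty_V n)) (lex_E EG empty_E) f (x, j) = (\<Sum>y\<in>nbhd VG EG x. \<Sum>k<n. f (y, k))"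
  by (simp add: vweight_def nbhd_lex_empty sum.cartesian_product')

lemma finite_friendship_V: "finite (friendship_V m)"
  by (simp add: friendship_V_def)

lemma nbhd_friendship_centre: "nbhd (friendship_V m) friendship_E None = Some ` ({..<m} \<times> UNIV)"
  by (auto simp: nbhd_def friendship_V_def)

lemma nbhd_friendship_leaf:
  "i < m \<Longrightarrow> nbhd (friendship_V m) friendship_E (Some (i, b)) = {None, Some (i, \<not> b)}"
  by (auto simp: nbhd_def friendship_V_def elim: friendship_E.elims)

definition friendship_index :: "nat \<Rightarrow> (nat \<times> bool) option \<Rightarrow> nat" where
  "friendship_index m x = (case x of None \<Rightarrow> 2*m | Some (i, b) \<Rightarrow> if b then m + i else i)"

lemma bij_betw_friendship_index: "bij_betw (friendship_index m) (friendship_V m) {..<2*m+1}"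
proof -
  have "inj_on (friendship_index m) (friendship_V m)"
    by (auto simp: inj_on_def friendship_V_def friendship_index_def split: if_splits)
  moreover have "friendship_index m ` friendship_V m = {..<2*m+1}"
  proof (intro equalityI subsetI)
    fix c assume "c \<in> {..<2*m+1}"
    then consider "c < m" | "m \<le> c" "c < 2*m" | "c = 2*m" by fastforce
    then show "c \<in> friendship_index m ` friendship_V m"
    proof cases
      case 1
      then have "c = friendship_index m (Some (c, False))" by (simp add: friendship_index_def)
      then show ?thesis using 1 by (auto simp: friendship_V_def)
    next
      case 2
      then have "c = friendship_index m (Some (c - m, True))" by (simp add: friendship_index_def)
      then show ?thesis using 2 by (auto simp: friendship_V_def)
    next
      case 3
      then show ?thesis by (auto simp: friendship_V_def friendship_index_def)
    qed
  qed (auto simp: friendship_V_def friendship_index_def)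
  ultimately show ?thesis by (simp add: bij_betw_def)
qed

lemma card_friendship_V: "card (friendship_V m) = 2*m + 1"
  using bij_betw_same_card[OF bij_betw_friendship_index] by simp

lemma vweight_lex_friendship_blocks:
  assumes "\<And>i. i < m \<Longrightarrow> (\<Sum>k<n. f (Some (i, False), k)) = a"
    and "\<And>i. i < m \<Longrightarrow> (\<Sum>k<n. f (Some (i, True), k)) = b"
    and "(\<Sum>k<n. f (None, k)) = c"
  shows "vweight (lex_V (friendship_V m) (empty_V n)) (lex_E friendship_E empty_E) f (None, j) = m * (a + b)"
    and "i < m \<Longrightarrow>
      vweight (lex_V (friendship_V m) (empty_V n)) (lex_E friendship_E empty_E) f (Some (i, \<beta>), j)
        = c + (if \<beta> then a else b)"
proof -
  have "(\<Sum>y\<in>Some ` ({..<m} \<times> UNIV). \<Sum>k<n. f (y, k))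
      = (\<Sum>i<m. (\<Sum>k<n. f (Some (i, False), k)) + (\<Sum>k<n. f (Some (i, True), k)))"
    by (simp add: sum.reindex sum.cartesian_product' UNIV_bool add.commute)
  also have "\<dots> = m * (a + b)" using assms(1,2) by simp
  finally show "vweight (lex_V (friendship_V m) (empty_V n)) (lex_E friendship_E empty_E) f (None, j)
      = m * (a + b)"
    by (simp add: vweight_lex_empty nbhd_friendship_centre)
next
  assume "i < m"
  then show "vweight (lex_V (friendship_V m) (empty_V n)) (lex_E friendship_E empty_E) f (Some (i, \<beta>), j)
      = c + (if \<beta> then a else b)"
    using assms by (simp add: vweight_lex_empty nbhd_friendship_leaf)
qed

lemma friendship_lex_block_labelling:
  fixes m n :: nat and f :: "(nat \<times> bool) option \<times> nat \<Rightarrow> nat"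
  defines "V \<equiv> lex_V (friendship_V m) (empty_V n)" and "E \<equiv> lex_E friendship_E empty_E"
  assumes "m > 0" "n > 0" "bij_betw f V {1..card V}"
    and "\<And>i. i < m \<Longrightarrow> (\<Sum>k<n. f (Some (i, False), k)) = a"
    and "\<And>i. i < m \<Longrightarrow> (\<Sum>k<n. f (Some (i, True), k)) = b"
    and "(\<Sum>k<n. f (None, k)) = c"
    and "a \<noteq> b" "c + a \<noteq> m * (a + b)" "c + b \<noteq> m * (a + b)"
  shows "local_distance_antimagic V E f" and "card (vweight V E f ` V) = 3"
proof -
  have weight: "vweight V E f (None, j) = m * (a + b)"
    "i < m \<Longrightarrow> vweight V E f (Some (i, \<beta>), j) = c + (if \<beta> then a else b)" for i \<beta> j
    unfolding V_def E_def using vweight_lex_friendship_blocks[OF assms(6-8)] by simp_all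
  have V: "(x, j) \<in> V \<longleftrightarrow> j < n \<and> (x = None \<or> (\<exists>i \<beta>. i < m \<and> x = Some (i, \<beta>)))" for x j
    by (auto simp: V_def lex_V_def empty_V_def friendship_V_def)
  have E: "E (x, j) (y, k) = friendship_E x y" for x y j k
    by (simp add: E_def lex_E_def empty_E_def)
  show "local_distance_antimagic V E f"
    unfolding local_distance_antimagic_def
  proof (intro conjI ballI impI)
    fix u v assume "u \<in> V" "v \<in> V" "E u v"
    then show "vweight V E f u \<noteq> vweight V E f v"
      using assms(9-11) by (cases u; cases v) (auto simp: V E weight split: if_splits)
  qed (rule assms(5))
  have "vweight V E f ` V = {m * (a + b), c + a, c + b}"
  proof (intro equalityI subsetI)
    fix w assume "w \<in> vweight V E f ` V"
    then show "w \<in> {m * (a + b), c + a, c + b}" by (auto simp: V weight)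
  next
    fix w assume "w \<in> {m * (a + b), c + a, c + b}"
    moreover have "(None, 0) \<in> V" "(Some (0, True), 0) \<in> V" "(Some (0, False), 0) \<in> V"
      using assms(3,4) by (auto simp: V)
    ultimately show "w \<in> vweight V E f ` V"
      using assms(3) by (force simp: weight)
  qed
  then show "card (vweight V E f ` V) = 3"
    using assms(9-11) by simp
qed

lemma bij_betw_layered_labelling:
  fixes col :: "'a \<Rightarrow> nat" and \<sigma> :: "nat \<Rightarrow> nat \<Rightarrow> nat"
  assumes col: "bij_betw col V {..<k}" and \<sigma>: "\<And>j. j < n \<Longrightarrow> \<sigma> j ` {..<k} = {..<k}"
  shows "bij_betw (\<lambda>(x, j). j * k + \<sigma> j (col x) + 1) (V \<times> {..<n}) {1..k * n}"
proof -
  let ?f = "\<lambda>(x, j). j * k + \<sigma> j (col x) + 1"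
  have "?f ` (V \<times> {..<n}) = {1..k * n}"
  proof (intro equalityI subsetI)
    fix g assume "g \<in> ?f ` (V \<times> {..<n})"
    then obtain x j where "x \<in> V" "j < n" and g: "g = j * k + \<sigma> j (col x) + 1" by auto
    then have "col x < k" using col by (auto simp: bij_betw_def)
    then have "\<sigma> j (col x) < k" using \<sigma>[OF \<open>j < n\<close>] by blast
    moreover have "(j + 1) * k \<le> n * k" using \<open>j < n\<close> by (intro mult_le_mono1) simp
    ultimately show "g \<in> {1..k * n}" using g by (simp add: algebra_simps)
  next
    fix g assume g: "g \<in> {1..k * n}"
    define j where "j = (g - 1) div k"
    define r where "r = (g - 1) mod k"
    have k: "k > 0" using g by (cases "k = 0") auto
    have gj: "g = j * k + r + 1" using g by (simp add: j_def r_def)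
    have "g - 1 < n * k" using g by (auto simp: mult.commute)
    then have "j < n" unfolding j_def by (rule less_mult_imp_div_less)
    moreover have "r < k" using k by (simp add: r_def)
    then obtain x where "x \<in> V" "\<sigma> j (col x) = r"
      using col \<sigma>[OF \<open>j < n\<close>] by (metis bij_betw_imp_surj_on imageE lessThan_iff)
    ultimately show "g \<in> ?f ` (V \<times> {..<n})" using gj by force
  qed
  moreover have "card (V \<times> {..<n}) = k * n"
    using bij_betw_same_card[OF col] by (simp add: card_cartesian_product)
  moreover have "finite (V \<times> {..<n})"
    using bij_betw_finite[OF col] by simp
  ultimately show ?thesis
    by (simp add: bij_betw_def eq_card_imp_inj_on)
qed

definition unpaired_rows :: "nat \<Rightarrow> nat" where
  "unpaired_rows n = (if even n then 2 else 3)"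

definition closing_row :: "nat \<Rightarrow> nat \<Rightarrow> nat \<Rightarrow> nat" where
  "closing_row n m c =
    (if even n then (if c < m then m - 1 - c else if c < 2*m then 3*m - 1 - c else 2*m)
     else (if c < m then 2*m - 1 - 2*c else if c < 2*m then 4*m - 2 - 2*c else 2*m))"

(* Layers j, j + 1 (j even, j < n - unpaired_rows n) are c and 2m - c and add 2m to every column;
   the unpaired layers are identities followed by closing_row, which makes the column sum
   (unpaired_rows n - 1) c + closing_row n m c constant on each of the blocks [0, m), [m, 2m), {2m}. *)
definition layer_perm :: "nat \<Rightarrow> nat \<Rightarrow> nat \<Rightarrow> nat \<Rightarrow> nat" where
  "layer_perm n m j c =
    (if j < n - unpaired_rows n then (if even j then c else 2*m - c)
     else if j = n - 1 then closing_row n m c else c)"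

lemma closing_row_image: "closing_row n m ` {..<2*m+1} = {..<2*m+1}"
proof (intro equalityI subsetI)
  fix r assume r: "r \<in> {..<2*m+1}"
  define c where "c = (if even n then (if r < m then m - 1 - r else if r < 2*m then 3*m - 1 - r else 2*m)
    else (if r = 2*m then 2*m else if odd r then m - 1 - r div 2 else 2*m - 1 - r div 2))"
  have "c < 2*m+1 \<and> closing_row n m c = r"
    using r by (auto simp: c_def closing_row_def elim!: oddE evenE)
  then show "r \<in> closing_row n m ` {..<2*m+1}" by force
qed (auto simp: closing_row_def)

lemma layer_perm_image: "layer_perm n m j ` {..<2*m+1} = {..<2*m+1}"
proof -
  have reflection: "(\<lambda>c. 2*m - c) ` {..<2*m+1} = {..<2*m+1}"
  proof (intro equalityI subsetI)
    fix r assume "r \<in> {..<2*m+1}"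
    then show "r \<in> (\<lambda>c. 2*m - c) ` {..<2*m+1}" by (intro image_eqI[of _ _ "2*m - r"]) auto
  qed auto
  have "layer_perm n m j = id \<or> layer_perm n m j = (\<lambda>c. 2*m - c) \<or> layer_perm n m j = closing_row n m"
    by (auto simp: layer_perm_def fun_eq_iff)
  then show ?thesis by (elim disjE) (use reflection closing_row_image in simp_all)
qed

lemma sum_alternating_complement:
  "(c::nat) \<le> d \<Longrightarrow> (\<Sum>j<2*k. if even j then c else d - c) = k * d"
  by (induction k) auto

lemma sum_layer_perm:
  assumes "n > 1" "c < 2*m+1"
  shows "(\<Sum>j<n. layer_perm n m j c)
    = (n - unpaired_rows n) div 2 * (2*m) + (unpaired_rows n - 1) * c + closing_row n m c"
proof -
  define k where "k = (n - unpaired_rows n) div 2"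
  have n: "n = 2*k + unpaired_rows n"
    using assms(1) by (auto simp: k_def unpaired_rows_def elim!: evenE oddE)
  have "(\<Sum>j<2*k. layer_perm n m j c) = (\<Sum>j<2*k. if even j then c else 2*m - c)"
    by (intro sum.cong) (auto simp: layer_perm_def k_def)
  also have "\<dots> = k * (2*m)"
    using assms(2) by (intro sum_alternating_complement) simp
  finally have paired: "(\<Sum>j\<in>{0..<2*k}. layer_perm n m j c) = k * (2*m)"
    by (simp add: atLeast0LessThan)
  have "(\<Sum>j\<in>{2*k..<n-1}. layer_perm n m j c) = (\<Sum>j\<in>{2*k..<n-1}. c)"
    by (intro sum.cong) (use n in \<open>auto simp: layer_perm_def\<close>)
  moreover have "{2*k..<n} = insert (n-1) {2*k..<n-1}"
    using n by (auto simp: unpaired_rows_def split: if_splits)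
  moreover have "layer_perm n m (n-1) c = closing_row n m c"
    using assms(1) by (auto simp: layer_perm_def unpaired_rows_def)
  ultimately have unpaired: "(\<Sum>j\<in>{2*k..<n}. layer_perm n m j c)
      = (unpaired_rows n - 1) * c + closing_row n m c"
    using n by (auto simp: unpaired_rows_def split: if_split_asm)
  have "(\<Sum>j<n. layer_perm n m j c)
      = (\<Sum>j\<in>{0..<2*k}. layer_perm n m j c) + (\<Sum>j\<in>{2*k..<n}. layer_perm n m j c)"
    unfolding atLeast0LessThan[symmetric]
    by (rule sum.atLeastLessThan_concat[symmetric]) (use n in simp_all)
  then show ?thesis
    using paired unpaired by (simp add: k_def)
qed

fun friendship_label :: "nat \<Rightarrow> nat \<Rightarrow> (nat \<times> bool) option \<times> nat \<Rightarrow> nat" where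
  "friendship_label m n (x, j) = j * (2*m+1) + layer_perm n m j (friendship_index m x) + 1"

lemma bij_betw_friendship_label:
  "bij_betw (friendship_label m n) (lex_V (friendship_V m) (empty_V n))
     {1..card (lex_V (friendship_V m) (empty_V n))}"
proof -
  have "card (lex_V (friendship_V m) (empty_V n)) = (2*m+1) * n"
    by (simp add: lex_V_def empty_V_def card_cartesian_product card_friendship_V)
  moreover have "friendship_label m n = (\<lambda>(x, j). j * (2*m+1) + layer_perm n m j (friendship_index m x) + 1)"
    by auto
  ultimately show ?thesis
    using bij_betw_layered_labelling[OF bij_betw_friendship_index layer_perm_image]
    by (simp add: lex_V_def empty_V_def)
qed

lemma column_sum_friendship_label:
  assumes "n > 1" "x \<in> friendship_V m"
  shows "(\<Sum>j<n. friendship_label m n (x, j))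
    = (\<Sum>j<n. j * (2*m+1) + 1) + (n - unpaired_rows n) div 2 * (2*m)
      + (unpaired_rows n - 1) * friendship_index m x + closing_row n m (friendship_index m x)"
proof -
  have "friendship_index m x < 2*m+1"
    using assms(2) bij_betw_friendship_index by (blast dest: bij_betw_apply)
  have "(\<Sum>j<n. friendship_label m n (x, j))
      = (\<Sum>j<n. (j * (2*m+1) + 1) + layer_perm n m j (friendship_index m x))"
    by (intro sum.cong) simp_all
  also have "\<dots> = (\<Sum>j<n. j * (2*m+1) + 1) + (\<Sum>j<n. layer_perm n m j (friendship_index m x))"
    by (rule sum.distrib)
  finally show ?thesis
    using sum_layer_perm[OF assms(1) \<open>friendship_index m x < 2*m+1\<close>] by simp
qed

lemma friendship_label_column_sums:
  assumes "m > 1" "n > 1"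
  obtains a b c where
    "\<And>i. i < m \<Longrightarrow> (\<Sum>k<n. friendship_label m n (Some (i, False), k)) = a"
    "\<And>i. i < m \<Longrightarrow> (\<Sum>k<n. friendship_label m n (Some (i, True), k)) = b"
    "(\<Sum>k<n. friendship_label m n (None, k)) = c"
    "a \<noteq> b" "c + a < m * (a + b)" "c + b < m * (a + b)"
proof -
  define K where "K = (\<Sum>j<n. j * (2*m+1) + 1) + (n - unpaired_rows n) div 2 * (2*m)"
  define a where "a = K + (if even n then m - 1 else 2*m - 1)"
  define b where "b = K + (if even n then 3*m - 1 else 4*m - 2)"
  define c where "c = K + (if even n then 4*m else 6*m)"
  have sum: "(\<Sum>k<n. friendship_label m n (x, k))
      = K + (unpaired_rows n - 1) * friendship_index m x + closing_row n m (friendship_index m x)"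
    if "x \<in> friendship_V m" for x
    using column_sum_friendship_label[OF assms(2) that] by (simp add: K_def)
  have "(\<Sum>j<n. 1::nat) \<le> (\<Sum>j<n. j * (2*m+1) + 1)"
    by (intro sum_mono) simp
  then have "n \<le> K" by (simp add: K_def)
  then have "c + a < 2 * (a + b)" "c + b < 2 * (a + b)"
    using assms by (auto simp: a_def b_def c_def)
  moreover have "2 * (a + b) \<le> m * (a + b)"
    using assms(1) by (intro mult_le_mono1) simp
  moreover have "a \<noteq> b"
    using assms(1) by (auto simp: a_def b_def)
  moreover have "(\<Sum>k<n. friendship_label m n (Some (i, False), k)) = a" if "i < m" for i
    using sum[of "Some (i, False)"] that
    by (simp add: friendship_V_def friendship_index_def closing_row_def unpaired_rows_def a_def)
  moreover have "(\<Sum>k<n. friendship_label m n (Some (i, True), k)) = b" if "i < m" for i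
    using sum[of "Some (i, True)"] that
    by (simp add: friendship_V_def friendship_index_def closing_row_def unpaired_rows_def b_def)
  moreover have "(\<Sum>k<n. friendship_label m n (None, k)) = c"
    using sum[of None]
    by (simp add: friendship_V_def friendship_index_def closing_row_def unpaired_rows_def c_def)
  ultimately show thesis
    using that by simp
qed

theorem mainTheorem20:
  fixes m n :: nat
  assumes "m > 1" and "n > 1"
  shows "chi_ld (lex_V (friendship_V m) (empty_V n)) (lex_E friendship_E empty_E) = 3"
proof -
  let ?V = "lex_V (friendship_V m) (empty_V n)" and ?E = "lex_E friendship_E empty_E"
  obtain a b c where sums:
    "\<And>i. i < m \<Longrightarrow> (\<Sum>k<n. friendship_label m n (Some (i, False), k)) = a"
    "\<And>i. i < m \<Longrightarrow> (\<Sum>k<n. friendship_label m n (Some (i, True), k)) = b"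
    "(\<Sum>k<n. friendship_label m n (None, k)) = c"
    and distinct: "a \<noteq> b" "c + a < m * (a + b)" "c + b < m * (a + b)"
    using friendship_label_column_sums[OF assms] by blast
  have upper: "local_distance_antimagic ?V ?E (friendship_label m n)"
    "card (vweight ?V ?E (friendship_label m n) ` ?V) = 3"
    using friendship_lex_block_labelling[OF _ _ bij_betw_friendship_label sums] assms distinct
    by simp_all
  have lower: "3 \<le> card (vweight ?V ?E f ` ?V)" if "local_distance_antimagic ?V ?E f" for f
    using assms that
    by (intro card_vweight_image_ge_3_if_triangle[where u = "(None, 0)"
          and v = "(Some (0, False), 0)" and w = "(Some (0, True), 0)"])
      (auto simp: lex_V_def empty_V_def lex_E_def friendship_V_def finite_friendship_V)
  show ?thesis
    unfolding chi_ld_def using upper lower by (intro Least_equality) blast+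
qed

end
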